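(* Let $a,b\in\mathbb{Z}$ with $a^2-b^2\neq 0$, and let $G$ be the finite abelian group presented by the matrix $\begin{pmatrix} a & b\\ b & a\end{pmatrix}$, i.e. $G=\mathbb{Z}^2/\operatorname{im}\begin{pmatrix} a & b\\ b & a\end{pmatrix}$. Then either $G$ has an element of order $16$, or in the canonical decomposition of $G$ both the number of summands isomorphic to $\mathbb{Z}_2$ and the number of summands isomorphic to $\mathbb{Z}_4$ are even.
   Context: The canonical decomposition of a finite abelian group is its unique decomposition as a direct sum of cyclic groups of prime-power orders. *)

theory Defs
  imports "HOL-Algebra.Algebra" "HOL-Computational_Algebra.Primes"
begin

definition matrix_image :: "int \<Rightarrow> int \<Rightarrow> (int \<times> int) set" where
  "matrix_image a b = {(a * x + b * y, b * x + a * y) | x y. True}"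

definition presented_group :: "int \<Rightarrow> int \<Rightarrow> (int \<times> int) set monoid" where
  "presented_group a b = (integer_group \<times>\<times> integer_group) Mod matrix_image a b"

definition prime_power :: "nat \<Rightarrow> bool" where
  "prime_power q \<longleftrightarrow> (\<exists>p k. Factorial_Ring.prime (p::nat) \<and> k \<ge> 1 \<and> q = p ^ k)"

end

theory Submission
  imports Defs
begin

text \<open>
  Write a = d a', b = d b' with d = gcd a b and a', b' coprime. A unimodular change of basis
  of Z^2 turns the relation matrix into diag(d, d m) with m = a'^2 - b'^2, so
  G = Z/d x Z/(d |m|); and m is odd or divisible by 8, because a', b' are coprime.
  If 16 divides d |m|, the second factor contains an element of order 16. Otherwise compare
  the sizes of the 2^j-torsion: in any decomposition into cyclic groups Z/q each factor
  contributes gcd(2^j, q), so these sizes determine, for j = 1, 2, 3, the number N_j of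
  factors whose order is divisible by 2^j. For Z/d x Z/(d |m|) the numbers N_1, N_2, N_3 are
  all even when m is odd, and all equal to 1 when 8 divides m (then d is odd). The numbers
  of summands Z/2 and Z/4 are N_1 - N_2 and N_2 - N_3, hence even.
\<close>

section \<open>Torsion counts\<close>

definition torsion_count :: "('a, 'b) monoid_scheme \<Rightarrow> nat \<Rightarrow> nat" where
  "torsion_count G n = card {x \<in> carrier G. x [^]\<^bsub>G\<^esub> n = \<one>\<^bsub>G\<^esub>}"

lemma iso_nat_pow_eq_one_iff:
  assumes "group G" "group H" "h \<in> iso G H" "x \<in> carrier G"
  shows "h x [^]\<^bsub>H\<^esub> (n::nat) = \<one>\<^bsub>H\<^esub> \<longleftrightarrow> x [^]\<^bsub>G\<^esub> n = \<one>\<^bsub>G\<^esub>"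
proof -
  interpret group_hom G H h
    using assms iso_imp_homomorphism by (simp add: group_hom_def group_hom_axioms_def)
  have "inj_on h (carrier G)"
    using assms(3) by (simp add: iso_def bij_betw_def)
  then show ?thesis
    using assms(4) by (metis hom_nat_pow hom_one inj_onD G.nat_pow_closed G.one_closed)
qed

lemma torsion_count_iso:
  assumes "group G" "group H" "G \<cong> H"
  shows "torsion_count G n = torsion_count H n"
proof -
  obtain h where h: "h \<in> iso G H"
    using assms(3) by (auto simp: is_iso_def)
  then have "bij_betw h (carrier G) (carrier H)"
    by (simp add: iso_def)
  then have "bij_betw h {x \<in> carrier G. x [^]\<^bsub>G\<^esub> n = \<one>\<^bsub>G\<^esub>}
                        {y \<in> carrier H. y [^]\<^bsub>H\<^esub> n = \<one>\<^bsub>H\<^esub>}"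
    by (rule bij_betw_Collect) (simp add: iso_nat_pow_eq_one_iff[OF assms(1,2) h])
  then show ?thesis
    unfolding torsion_count_def by (rule bij_betw_same_card)
qed

lemma pow_DirProd:
  "(x, y) [^]\<^bsub>G \<times>\<times> H\<^esub> (n::nat) = (x [^]\<^bsub>G\<^esub> n, y [^]\<^bsub>H\<^esub> n)"
  by (induction n) simp_all

lemma torsion_count_DirProd:
  "torsion_count (G \<times>\<times> H) n = torsion_count G n * torsion_count H n"
proof -
  have "{z \<in> carrier (G \<times>\<times> H). z [^]\<^bsub>G \<times>\<times> H\<^esub> n = \<one>\<^bsub>G \<times>\<times> H\<^esub>}
      = {x \<in> carrier G. x [^]\<^bsub>G\<^esub> n = \<one>\<^bsub>G\<^esub>} \<times> {y \<in> carrier H. y [^]\<^bsub>H\<^esub> n = \<one>\<^bsub>H\<^esub>}"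
    by (auto simp: pow_DirProd)
  then show ?thesis
    by (simp add: torsion_count_def card_cartesian_product)
qed

lemma torsion_count_DirProd_list:
  assumes "\<And>G. G \<in> set Gs \<Longrightarrow> group G"
  shows "torsion_count (DirProd_list Gs) n = (\<Prod>G\<leftarrow>Gs. torsion_count G n)"
  using assms
proof (induction Gs)
  case Nil
  have "x [^]\<^bsub>DirProd_list []\<^esub> n = []" for x :: "'a list"
    by (cases n) (simp_all add: DirProd_list_def)
  then show ?case
    by (simp add: torsion_count_def DirProd_list_def)
next
  case (Cons G Gs)
  have "group G" "group (DirProd_list Gs)"
    using Cons.prems by (auto intro!: DirProd_list_is_group)
  then have "torsion_count (G \<times>\<times> DirProd_list Gs) n = torsion_count (DirProd_list (G # Gs)) n"
    using Cons.prems
    by (intro torsion_count_iso DirProd_group DirProd_list_is_group is_isoI[OF DirProd_list_iso])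
      (auto simp: nth_Cons split: nat.split)
  then show ?case
    using Cons by (simp add: torsion_count_DirProd)
qed

lemma dvd_mult_iff_div_gcd_dvd:
  fixes q n x :: int
  assumes "q \<noteq> 0"
  shows "q dvd n * x \<longleftrightarrow> q div gcd n q dvd x"
proof -
  obtain s r where n: "n = s * gcd n q" and q: "q = r * gcd n q" and "coprime r s"
    using gcd_coprime_exists[of n q] assms by (auto simp: coprime_commute)
  have "gcd n q \<noteq> 0"
    using assms by simp
  then have "q dvd n * x \<longleftrightarrow> r dvd s * x"
    using assms by (subst n, subst q) (simp add: mult.commute mult.left_commute)
  also have "\<dots> \<longleftrightarrow> r dvd x"
    using \<open>coprime r s\<close> by (rule coprime_dvd_mult_right_iff)
  finally show ?thesis
    using \<open>gcd n q \<noteq> 0\<close> by (subst (2) q) simp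
qed

lemma card_multiples_below:
  fixes r g :: nat
  assumes "r > 0"
  shows "card {x \<in> {0..<int (r * g)}. int r dvd x} = g"
proof -
  have "{x \<in> {0..<int (r * g)}. int r dvd x} = (\<lambda>k. int r * k) ` {0..<int g}"
    using assms by (auto simp: zero_le_mult_iff elim!: dvdE)
  moreover have "inj_on (\<lambda>k. int r * k) {0..<int g}"
    using assms by (simp add: inj_on_def)
  ultimately show ?thesis
    by (simp add: card_image)
qed

lemma torsion_count_integer_mod_group:
  assumes "q > 0"
  shows "torsion_count (integer_mod_group q) n = gcd n q"
proof -
  define r where "r = q div gcd n q"
  have q: "q = r * gcd n q"
    by (simp add: r_def)
  have "r > 0"
    using assms by (simp add: r_def div_greater_zero_iff)
  have torsion_set: "{x \<in> carrier (integer_mod_group q). x [^]\<^bsub>integer_mod_group q\<^esub> n = 0}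
      = {x \<in> {0..<int (r * gcd n q)}. int r dvd x}"
    using assms
    by (simp add: carrier_integer_mod_group dvd_mult_iff_div_gcd_dvd r_def zdiv_int gcd_int_def
        flip: q dvd_eq_mod_eq_0)
  show ?thesis
    unfolding torsion_count_def one_integer_mod_group torsion_set
    using \<open>r > 0\<close> by (rule card_multiples_below)
qed

lemma prod_gcd_eq_if_iso:
  fixes qs :: "nat list" and d D :: nat
  assumes "group G" "\<forall>q \<in> set qs. q > 0" "0 < d" "0 < D"
    and "G \<cong> DirProd_list (map integer_mod_group qs)"
    and "G \<cong> integer_mod_group d \<times>\<times> integer_mod_group D"
  shows "(\<Prod>q\<leftarrow>qs. gcd n q) = gcd n d * gcd n D"
proof -
  have "(\<Prod>q\<leftarrow>qs. gcd n q) = (\<Prod>q\<leftarrow>qs. torsion_count (integer_mod_group q) n)"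
    using assms(2) by (simp add: torsion_count_integer_mod_group cong: map_cong)
  also have "\<dots> = torsion_count (DirProd_list (map integer_mod_group qs)) n"
    by (subst torsion_count_DirProd_list) (auto simp: comp_def)
  also have "\<dots> = torsion_count G n"
    using assms(1,5) by (intro torsion_count_iso[symmetric] DirProd_list_is_group) simp_all
  also have "\<dots> = torsion_count (integer_mod_group d \<times>\<times> integer_mod_group D) n"
    using assms(1,6) by (intro torsion_count_iso) (simp_all add: DirProd_group)
  also have "\<dots> = gcd n d * gcd n D"
    using assms(3,4) by (simp add: torsion_count_DirProd torsion_count_integer_mod_group)
  finally show ?thesis .
qed

section \<open>Counting cyclic factors of prime-power order\<close>

definition count_dvd :: "nat \<Rightarrow> nat list \<Rightarrow> nat" where
  "count_dvd k qs = length (filter (\<lambda>q. k dvd q) qs)"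

lemma gcd_prime_power_Suc:
  fixes p q :: nat
  assumes "Factorial_Ring.prime p"
  shows "gcd (p ^ Suc j) q = gcd (p ^ j) q * (if p ^ Suc j dvd q then p else 1)"
proof (cases "p ^ Suc j dvd q")
  case True
  then have "p ^ j dvd q"
    by (rule dvd_trans[rotated]) (simp add: le_imp_power_dvd)
  with True show ?thesis
    by (simp add: gcd_nat.absorb1)
next
  case False
  have "gcd (p ^ Suc j) q dvd p ^ Suc j"
    by (rule gcd_dvd1)
  then obtain i where "i \<le> Suc j" and i: "gcd (p ^ Suc j) q = p ^ i"
    unfolding divides_primepow_nat[OF assms] by blast
  moreover have "i \<noteq> Suc j"
    using False i gcd_dvd2[of "p ^ Suc j" q] by auto
  ultimately have "i \<le> j"
    by simp
  then have "gcd (p ^ Suc j) q dvd p ^ j"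
    unfolding i by (rule le_imp_power_dvd)
  then have "gcd (p ^ Suc j) q dvd gcd (p ^ j) q"
    by simp
  moreover have "gcd (p ^ j) q dvd gcd (p ^ Suc j) q"
    by (simp add: gcd_mono le_imp_power_dvd)
  ultimately have "gcd (p ^ Suc j) q = gcd (p ^ j) q"
    by (rule dvd_antisym)
  with False show ?thesis
    by simp
qed

lemma prod_gcd_prime_power_Suc:
  fixes p :: nat
  assumes "Factorial_Ring.prime p"
  shows "(\<Prod>q\<leftarrow>qs. gcd (p ^ Suc j) q) = (\<Prod>q\<leftarrow>qs. gcd (p ^ j) q) * p ^ count_dvd (p ^ Suc j) qs"
proof (induction qs)
  case (Cons q qs)
  then show ?case
    unfolding list.map prod_list.Cons gcd_prime_power_Suc[OF assms] by (simp add: count_dvd_def)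
qed (simp add: count_dvd_def)

lemma count_dvd_eq_if_prod_gcd_eq:
  fixes p :: nat
  assumes "Factorial_Ring.prime p" and "\<And>n. (\<Prod>q\<leftarrow>qs. gcd n q) = (\<Prod>r\<leftarrow>rs. gcd n r)"
  shows "count_dvd (p ^ Suc j) qs = count_dvd (p ^ Suc j) rs"
proof -
  have "(\<Prod>q\<leftarrow>qs. gcd (p ^ j) q) * p ^ count_dvd (p ^ Suc j) qs
      = (\<Prod>r\<leftarrow>rs. gcd (p ^ j) r) * p ^ count_dvd (p ^ Suc j) rs"
    using assms(2)[of "p ^ Suc j"] by (simp only: prod_gcd_prime_power_Suc[OF assms(1)])
  moreover have "(\<Prod>q\<leftarrow>qs. gcd (p ^ j) q) \<noteq> 0"
    using assms(1) by (auto simp: prod_list_zero_iff prime_gt_0_nat)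
  ultimately have "p ^ count_dvd (p ^ Suc j) qs = p ^ count_dvd (p ^ Suc j) rs"
    by (simp add: assms(2))
  then show ?thesis
    using power_inject_exp[OF prime_gt_1_nat[OF assms(1)]] by blast
qed

lemma prime_power_gt_0: "prime_power q \<Longrightarrow> q > 0"
  by (auto simp: prime_power_def prime_gt_0_nat)

lemma prime_power_dvd_iff:
  fixes p :: nat
  assumes "Factorial_Ring.prime p" "j \<ge> 1" "prime_power q"
  shows "p ^ j dvd q \<longleftrightarrow> q = p ^ j \<or> p ^ Suc j dvd q"
proof
  assume "p ^ j dvd q"
  obtain r k where "Factorial_Ring.prime r" "k \<ge> 1" and q: "q = r ^ k"
    using assms(3) by (auto simp: prime_power_def)
  have "p dvd p ^ j"
    using assms(2) by (simp add: dvd_power)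
  then have "p dvd r ^ k"
    using \<open>p ^ j dvd q\<close> unfolding q by (rule dvd_trans)
  then have "p = r"
    using \<open>Factorial_Ring.prime r\<close> \<open>k \<ge> 1\<close> assms(1)
    by (simp add: prime_dvd_power_iff primes_dvd_imp_eq)
  then have "j \<le> k"
    using \<open>p ^ j dvd q\<close> assms(1) q by (simp add: dvd_power_iff_le prime_ge_2_nat)
  then show "q = p ^ j \<or> p ^ Suc j dvd q"
    using \<open>p = r\<close> q le_imp_power_dvd[of "Suc j" k p] by (cases "k = j") auto
qed auto

lemma count_dvd_prime_power:
  fixes p :: nat
  assumes "Factorial_Ring.prime p" "j \<ge> 1" "\<forall>q \<in> set qs. prime_power q"
  shows "count_dvd (p ^ j) qs = count_list qs (p ^ j) + count_dvd (p ^ Suc j) qs"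
  using assms(3)
proof (induction qs)
  case Nil
  then show ?case
    by (simp add: count_dvd_def)
next
  case (Cons q qs)
  have "\<not> p ^ Suc j dvd p ^ j"
    using assms(1) by (simp add: dvd_power_iff_le prime_ge_2_nat del: power_Suc)
  moreover have "p ^ j dvd q \<longleftrightarrow> q = p ^ j \<or> p ^ Suc j dvd q"
    using Cons.prems by (simp add: prime_power_dvd_iff[OF assms(1,2)] del: power_Suc)
  ultimately show ?case
    using Cons by (auto simp: count_dvd_def)
qed

lemma even_count_list_2_4:
  fixes qs :: "nat list" and d m :: nat
  assumes prime_powers: "\<forall>q \<in> set qs. prime_power q"
    and torsion: "\<And>n. (\<Prod>q\<leftarrow>qs. gcd n q) = gcd n d * gcd n (d * m)"
    and m: "odd m \<or> 8 dvd m" and not_16_dvd: "\<not> 16 dvd d * m"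
  shows "even (count_list qs 2) \<and> even (count_list qs 4)"
proof -
  define N where "N k = count_dvd k [d, d * m]" for k
  have "count_dvd (2 ^ Suc j) qs = N (2 ^ Suc j)" for j
    unfolding N_def using torsion by (intro count_dvd_eq_if_prod_gcd_eq) simp_all
  from this[of 0] this[of 1] this[of 2]
  have "count_dvd 2 qs = N 2" "count_dvd 4 qs = N 4" "count_dvd 8 qs = N 8"
    by simp_all
  moreover have "count_dvd 2 qs = count_list qs 2 + count_dvd 4 qs"
    using count_dvd_prime_power[OF two_is_prime_nat _ prime_powers, of 1] by simp
  moreover have "count_dvd 4 qs = count_list qs 4 + count_dvd 8 qs"
    using count_dvd_prime_power[OF two_is_prime_nat _ prime_powers, of 2] by simp
  ultimately have "count_list qs 2 + N 4 = N 2" "count_list qs 4 + N 8 = N 4"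
    by simp_all
  moreover consider "odd m" | "8 dvd m" "odd d"
    using m not_16_dvd mult_dvd_mono[of 2 d 8 m] by auto
  then have "even (N 2) \<and> even (N 4) \<and> even (N 8) \<or> N 2 = 1 \<and> N 4 = 1 \<and> N 8 = 1"
  proof cases
    case 1
    then have "2 ^ j dvd d * m \<longleftrightarrow> 2 ^ j dvd d" for j :: nat
      by (simp add: coprime_dvd_mult_left_iff)
    from this[of 1] this[of 2] this[of 3] show ?thesis
      using 1 by (simp add: N_def count_dvd_def)
  next
    case 2
    then show ?thesis
      by (auto simp: N_def count_dvd_def dest: dvd_trans[of _ 8])
  qed
  ultimately show ?thesis
    by presburger
qed

section \<open>Invariant factors of the presented group\<close>

lemma integer_pair_quotient_iso:
  fixes \<alpha> \<beta> \<gamma> \<delta> :: int and n1 n2 :: nat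
  assumes det: "\<alpha> * \<delta> - \<beta> * \<gamma> = 1"
  shows "(integer_group \<times>\<times> integer_group)
           Mod {(x, y). int n1 dvd \<alpha> * x + \<beta> * y \<and> int n2 dvd \<gamma> * x + \<delta> * y}
         \<cong> integer_mod_group n1 \<times>\<times> integer_mod_group n2"
proof -
  define \<phi> where "\<phi> = (\<lambda>(x, y). ((\<alpha> * x + \<beta> * y) mod int n1, (\<gamma> * x + \<delta> * y) mod int n2))"
  have mod_in_carrier: "z mod int n \<in> carrier (integer_mod_group n)" for z n
    by (simp add: carrier_integer_mod_group)
  have "\<phi> \<in> hom (integer_group \<times>\<times> integer_group) (integer_mod_group n1 \<times>\<times> integer_mod_group n2)"
    by (rule homI) (auto simp: \<phi>_def mod_in_carrier mod_add_eq algebra_simps)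
  then interpret group_hom "integer_group \<times>\<times> integer_group"
      "integer_mod_group n1 \<times>\<times> integer_mod_group n2" \<phi>
    by (simp add: group_hom_def group_hom_axioms_def DirProd_group)
  have "\<phi> ` carrier (integer_group \<times>\<times> integer_group) = carrier (integer_mod_group n1 \<times>\<times> integer_mod_group n2)"
  proof (intro equalityI subsetI)
    fix c assume "c \<in> carrier (integer_mod_group n1 \<times>\<times> integer_mod_group n2)"
    then obtain c1 c2 where c: "c = (c1, c2)" "c1 mod int n1 = c1" "c2 mod int n2 = c2"
      by (cases c) (auto simp: carrier_integer_mod_group split: if_splits)
    have "\<alpha> * (\<delta> * c1 - \<beta> * c2) + \<beta> * (\<alpha> * c2 - \<gamma> * c1) = (\<alpha> * \<delta> - \<beta> * \<gamma>) * c1"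
         "\<gamma> * (\<delta> * c1 - \<beta> * c2) + \<delta> * (\<alpha> * c2 - \<gamma> * c1) = (\<alpha> * \<delta> - \<beta> * \<gamma>) * c2"
      by (simp_all add: algebra_simps)
    then have "\<phi> (\<delta> * c1 - \<beta> * c2, \<alpha> * c2 - \<gamma> * c1) = c"
      using c by (simp add: \<phi>_def det)
    then show "c \<in> \<phi> ` carrier (integer_group \<times>\<times> integer_group)"
      by (auto intro: image_eqI[OF sym])
  qed (auto simp: \<phi>_def mod_in_carrier)
  moreover have "kernel (integer_group \<times>\<times> integer_group) (integer_mod_group n1 \<times>\<times> integer_mod_group n2) \<phi>
      = {(x, y). int n1 dvd \<alpha> * x + \<beta> * y \<and> int n2 dvd \<gamma> * x + \<delta> * y}"
    by (auto simp: kernel_def \<phi>_def dvd_eq_mod_eq_0)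
  ultimately show ?thesis
    using FactGroup_iso by simp
qed

lemma matrix_image_scaled:
  fixes a b d u v :: int
  assumes bezout: "u * a + v * b = 1"
  shows "matrix_image (d * a) (d * b)
           = {(x, y). d dvd - v * x - u * y \<and> d * (a\<^sup>2 - b\<^sup>2) dvd a * x - b * y}"
  \<comment> \<open>P = ((-v, -u), (a, -b)) is unimodular and P ((a, b), (b, a)) = ((-(v a + u b), -1), (a^2 - b^2, 0)).\<close>
proof (intro equalityI subsetI)
  fix p assume "p \<in> matrix_image (d * a) (d * b)"
  then obtain k l where p: "p = (d * a * k + d * b * l, d * b * k + d * a * l)"
    by (auto simp: matrix_image_def algebra_simps)
  have "- v * fst p - u * snd p = d * (- (v * a + u * b) * k - (u * a + v * b) * l)"
       "a * fst p - b * snd p = d * (a\<^sup>2 - b\<^sup>2) * k"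
    by (simp_all add: p algebra_simps power2_eq_square)
  then show "p \<in> {(x, y). d dvd - v * x - u * y \<and> d * (a\<^sup>2 - b\<^sup>2) dvd a * x - b * y}"
    by (cases p) auto
next
  fix p assume "p \<in> {(x, y). d dvd - v * x - u * y \<and> d * (a\<^sup>2 - b\<^sup>2) dvd a * x - b * y}"
  then obtain x y S T where p: "p = (x, y)"
    and S: "- v * x - u * y = d * S" and T: "a * x - b * y = d * (a\<^sup>2 - b\<^sup>2) * T"
    by (auto simp: dvd_def)
  have "x = (u * a + v * b) * x"
    by (simp add: bezout)
  also have "\<dots> = u * (a * x - b * y) - b * (- v * x - u * y)"
    by (simp add: algebra_simps)
  also have "\<dots> = u * (d * (a\<^sup>2 - b\<^sup>2) * T) - b * (d * S)"
    unfolding S T ..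
  also have "\<dots> = d * a * T + d * b * (- S - (u * b + v * a) * T) + d * a * T * (u * a + v * b - 1)"
    by (simp add: algebra_simps power2_eq_square)
  finally have x: "x = d * a * T + d * b * (- S - (u * b + v * a) * T)"
    by (simp add: bezout)
  have "y = (u * a + v * b) * y"
    by (simp add: bezout)
  also have "\<dots> = - a * (- v * x - u * y) - v * (a * x - b * y)"
    by (simp add: algebra_simps)
  also have "\<dots> = - a * (d * S) - v * (d * (a\<^sup>2 - b\<^sup>2) * T)"
    unfolding S T ..
  also have "\<dots> = d * b * T + d * a * (- S - (u * b + v * a) * T) + d * b * T * (u * a + v * b - 1)"
    by (simp add: algebra_simps power2_eq_square)
  finally have y: "y = d * b * T + d * a * (- S - (u * b + v * a) * T)"
    by (simp add: bezout)
  then show "p \<in> matrix_image (d * a) (d * b)"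
    unfolding matrix_image_def p x y by blast
qed

lemma presented_group_iso:
  fixes a b :: int and d :: nat
  assumes "coprime a b"
  shows "presented_group (int d * a) (int d * b)
           \<cong> integer_mod_group d \<times>\<times> integer_mod_group (d * nat \<bar>a\<^sup>2 - b\<^sup>2\<bar>)"
proof -
  obtain u v where bezout: "u * a + v * b = 1"
    using assms bezout_int[of a b] by auto
  have image: "matrix_image (int d * a) (int d * b)
      = {(x, y). int d dvd (- v) * x + (- u) * y
                 \<and> int (d * nat \<bar>a\<^sup>2 - b\<^sup>2\<bar>) dvd a * x + (- b) * y}"
  proof -
    have "int d * \<bar>a\<^sup>2 - b\<^sup>2\<bar> = \<bar>int d * (a\<^sup>2 - b\<^sup>2)\<bar>"
      by (simp add: abs_mult)
    then show ?thesis
      by (simp add: matrix_image_scaled[OF bezout] abs_dvd_iff)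
  qed
  show ?thesis
    unfolding presented_group_def image
    by (rule integer_pair_quotient_iso) (use bezout in simp)
qed

lemma group_presented_group: "group (presented_group a b)"
proof -
  interpret Z2: group "integer_group \<times>\<times> integer_group"
    by (simp add: DirProd_group)
  have "comm_group (integer_group \<times>\<times> integer_group)"
    by (rule Z2.group_comm_groupI) auto
  moreover have "subgroup (matrix_image a b) (integer_group \<times>\<times> integer_group)"
  proof (rule Z2.subgroupI)
    show "matrix_image a b \<noteq> {}"
      by (auto simp: matrix_image_def)
  next
    fix p assume "p \<in> matrix_image a b"
    then obtain x y where "p = (a * x + b * y, b * x + a * y)"
      by (auto simp: matrix_image_def)
    then have "inv\<^bsub>integer_group \<times>\<times> integer_group\<^esub> p = (a * - x + b * - y, b * - x + a * - y)"
      by simp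
    then show "inv\<^bsub>integer_group \<times>\<times> integer_group\<^esub> p \<in> matrix_image a b"
      unfolding matrix_image_def by blast
  next
    fix p q assume "p \<in> matrix_image a b" "q \<in> matrix_image a b"
    then obtain x y x' y' where "p = (a * x + b * y, b * x + a * y)" "q = (a * x' + b * y', b * x' + a * y')"
      by (auto simp: matrix_image_def)
    then have "p \<otimes>\<^bsub>integer_group \<times>\<times> integer_group\<^esub> q
        = (a * (x + x') + b * (y + y'), b * (x + x') + a * (y + y'))"
      by (simp add: algebra_simps)
    then show "p \<otimes>\<^bsub>integer_group \<times>\<times> integer_group\<^esub> q \<in> matrix_image a b"
      unfolding matrix_image_def by blast
  qed simp
  ultimately show ?thesis
    unfolding presented_group_def
    by (simp add: comm_group.subgroup_imp_normal normal.factorgroup_is_group)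
qed

lemma eight_dvd_odd_square_minus_one:
  fixes a :: int
  assumes "odd a"
  shows "8 dvd a\<^sup>2 - 1"
proof -
  obtain k where a: "a = 2 * k + 1"
    using assms by (rule oddE)
  have "even (k * (k + 1))"
    by simp
  then obtain l where l: "k * (k + 1) = 2 * l"
    by (rule evenE)
  have "a\<^sup>2 - 1 = 4 * (k * (k + 1))"
    by (simp add: a power2_eq_square algebra_simps)
  then show ?thesis
    by (simp add: l)
qed

lemma coprime_square_diff_odd_or_8_dvd:
  fixes a b :: int
  assumes "coprime a b"
  shows "odd (a\<^sup>2 - b\<^sup>2) \<or> 8 dvd a\<^sup>2 - b\<^sup>2"
proof (cases "odd a \<and> odd b")
  case True
  then have "8 dvd (a\<^sup>2 - 1) - (b\<^sup>2 - 1)"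
    by (intro dvd_diff eight_dvd_odd_square_minus_one) auto
  then show ?thesis
    by simp
next
  case False
  moreover have "\<not> (even a \<and> even b)"
    using assms by (auto simp: coprime_def dest: spec[of _ 2])
  ultimately show ?thesis
    by auto
qed

lemma presented_group_invariant_factors:
  fixes a b :: int
  assumes "a\<^sup>2 - b\<^sup>2 \<noteq> 0"
  obtains d m :: nat where "d > 0" "m > 0" "odd m \<or> 8 dvd m"
    and "presented_group a b \<cong> integer_mod_group d \<times>\<times> integer_mod_group (d * m)"
proof -
  have "gcd a b \<noteq> 0"
    using assms by auto
  then obtain a' b' where a: "a = a' * gcd a b" and b: "b = b' * gcd a b" and "coprime a' b'"
    using gcd_coprime_exists by blast
  define d where "d = nat (gcd a b)"
  define m where "m = nat \<bar>a'\<^sup>2 - b'\<^sup>2\<bar>"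
  have "int d = gcd a b"
    by (simp add: d_def)
  then have "a = int d * a'" "b = int d * b'"
    using a b by (metis mult.commute)+
  then have "presented_group a b \<cong> integer_mod_group d \<times>\<times> integer_mod_group (d * m)"
    unfolding m_def using presented_group_iso[OF \<open>coprime a' b'\<close>] by simp
  moreover have "a\<^sup>2 - b\<^sup>2 = (gcd a b)\<^sup>2 * (a'\<^sup>2 - b'\<^sup>2)"
    by (subst a, subst b) (simp add: power_mult_distrib algebra_simps)
  then have "m > 0"
    using assms by (simp add: m_def)
  moreover have "odd m \<or> 8 dvd m"
    using coprime_square_diff_odd_or_8_dvd[OF \<open>coprime a' b'\<close>]
    by (simp add: m_def even_nat_iff flip: int_dvd_int_iff)
  moreover have "d > 0"
    using \<open>gcd a b \<noteq> 0\<close> by (simp add: d_def)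
  ultimately show ?thesis
    using that by blast
qed

section \<open>Elements of given order\<close>

lemma iso_ord_eq:
  assumes "group G" "group H" "h \<in> iso G H" "x \<in> carrier G"
  shows "group.ord H (h x) = group.ord G x"
proof -
  have "h x \<in> carrier H"
    using assms(3,4) by (auto simp: iso_iff)
  then show ?thesis
    by (simp add: group.ord_unique[OF assms(2)] group.pow_eq_id[OF assms(1,4)]
        iso_nat_pow_eq_one_iff[OF assms])
qed

lemma iso_ex_ord:
  assumes "group G" "group H" "G \<cong> H" "y \<in> carrier H"
  shows "\<exists>x \<in> carrier G. group.ord G x = group.ord H y"
proof -
  obtain h where h: "h \<in> iso G H"
    using assms(3) by (auto simp: is_iso_def)
  have "y \<in> h ` carrier G"
    using h assms(4) by (simp add: iso_iff)
  then obtain x where "x \<in> carrier G" "h x = y"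
    by blast
  then show ?thesis
    using iso_ord_eq[OF assms(1,2) h] by metis
qed

lemma ord_DirProd_one_left:
  assumes "group G" "group H" "y \<in> carrier H"
  shows "group.ord (G \<times>\<times> H) (\<one>\<^bsub>G\<^esub>, y) = group.ord H y"
  using assms
  by (simp add: group.ord_unique DirProd_group pow_DirProd group.pow_eq_id group.is_monoid
      monoid.nat_pow_one)

lemma ord_integer_mod_group_divisor:
  fixes n k :: nat
  assumes "k > 0" "n > 1"
  shows "group.ord (integer_mod_group (n * k)) (int k) = n"
proof -
  have "int k \<in> carrier (integer_mod_group (n * k))"
    using assms by (simp add: carrier_integer_mod_group)
  moreover have "int j * int k mod int (n * k) = 0 \<longleftrightarrow> n dvd j" for j
    using assms by (simp add: dvd_eq_mod_eq_0[symmetric] flip: of_nat_mult)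
  ultimately show ?thesis
    by (simp add: group.ord_unique)
qed

lemma ex_ord_of_dvd_invariant_factor:
  fixes d D n :: nat
  assumes "group G" "G \<cong> integer_mod_group d \<times>\<times> integer_mod_group D" "n dvd D" "0 < D" "1 < n"
  shows "\<exists>x \<in> carrier G. group.ord G x = n"
proof -
  obtain k where D: "D = n * k" and "k > 0"
    using assms(3,4) by auto
  have k: "int k \<in> carrier (integer_mod_group D)"
    using D \<open>k > 0\<close> assms(5) by (simp add: carrier_integer_mod_group)
  have "group.ord (integer_mod_group d \<times>\<times> integer_mod_group D) (0, int k)
      = group.ord (integer_mod_group D) (int k)"
    using ord_DirProd_one_left[OF group_integer_mod_group group_integer_mod_group k] by simp
  also have "\<dots> = n"
    unfolding D using \<open>k > 0\<close> assms(5) by (rule ord_integer_mod_group_divisor)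
  finally show ?thesis
    using iso_ex_ord[OF assms(1) DirProd_group assms(2), of "(0, int k)"] k by simp
qed

theorem mainTheorem9:
  fixes a b :: int
  assumes "a ^ 2 - b ^ 2 \<noteq> 0"
  shows "(\<exists>x \<in> carrier (presented_group a b). group.ord (presented_group a b) x = 16)
         \<or> (\<forall>qs. (\<forall>q \<in> set qs. prime_power q)
                  \<and> presented_group a b \<cong> DirProd_list (map integer_mod_group qs)
                \<longrightarrow> even (count_list qs 2) \<and> even (count_list qs 4))"
proof -
  obtain d m :: nat where "d > 0" "m > 0" and m: "odd m \<or> 8 dvd m"
    and iso: "presented_group a b \<cong> integer_mod_group d \<times>\<times> integer_mod_group (d * m)"
    using presented_group_invariant_factors[OF assms] .
  show ?thesis
  proof (cases "16 dvd d * m")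
    case True
    then show ?thesis
      using ex_ord_of_dvd_invariant_factor[OF group_presented_group iso] \<open>d > 0\<close> \<open>m > 0\<close> by simp
  next
    case False
    have "even (count_list qs 2) \<and> even (count_list qs 4)"
      if "\<forall>q \<in> set qs. prime_power q" "presented_group a b \<cong> DirProd_list (map integer_mod_group qs)"
      for qs
      using that \<open>d > 0\<close> \<open>m > 0\<close> False
      by (intro even_count_list_2_4[OF _ prod_gcd_eq_if_iso[OF group_presented_group] m])
        (auto simp: prime_power_gt_0 iso)
    then show ?thesis
      by blast
  qed
qed

end
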